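(* Let $k,l$ be natural numbers, $\alpha,\beta\ge0$ real, and $\sigma,\tau$ complex numbers with $\sigma\tau\neq0$. Suppose that $\mathrm{BE}(k,l,\alpha,\beta,\sigma,\tau)$, $\mathrm{BE}(k,l,\alpha,\beta,-\sigma,-\tau)$, $\mathrm{BE}(k,l,\alpha,\beta,\sigma,-\tau)$ and $\mathrm{BE}(k,l,\alpha,\beta,-\sigma,\tau)$ all hold. Then $\mathrm{BE}(2k,2l,\alpha+k,\beta,\sigma^2,\tau^2)$ and $\mathrm{BE}(2k,2l,\alpha,\beta+l,\sigma^2,\tau^2)$ both hold.
   Context: The Fourier transform is $\hat\varphi(\xi,\eta)=\int_{\mathbb{R}^2}\varphi(x,y)e^{-2\pi i(x\xi+y\eta)}\,dx\,dy$. For real $\alpha,\beta\ge0$ and Schwartz functions $f,g$ on $\mathbb{R}^2$ set $\langle f,g\rangle_{W_2^{\alpha,\beta}}=\int_{\mathbb{R}^2}\hat f(\xi,\eta)\overline{\hat g(\xi,\eta)}|\xi|^{2\alpha}|\eta|^{2\beta}\,d\xi\,d\eta$. For natural $k,l$, real $\alpha,\beta\ge0$ and non-zero complex $\sigma,\tau$, the statement $\mathrm{BE}(k,l,\alpha,\beta,\sigma,\tau)$ means: there is a constant $C$ such that for all Schwartz functions $f,g$ on $\mathbb{R}^2$, $\left|\langle f,g\rangle_{W_2^{\alpha,\beta}}\right|\le C\,\|(\partial_1^k-\tau\partial_2^l)f\|_{L_1(\mathbb{R}^2)}\,\|(\partial_1^k-\sigma\partial_2^l)g\|_{L_1(\mathbb{R}^2)}$,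 where $\partial_j$ is differentiation in the $j$-th variable. *)

theory Defs
  imports "HOL-Analysis.Analysis"
begin

definition partial1 :: "(real \<times> real \<Rightarrow> complex) \<Rightarrow> (real \<times> real \<Rightarrow> complex)" where
  "partial1 f = (\<lambda>(x, y). vector_derivative (\<lambda>t. f (t, y)) (at x))"

definition partial2 :: "(real \<times> real \<Rightarrow> complex) \<Rightarrow> (real \<times> real \<Rightarrow> complex)" where
  "partial2 f = (\<lambda>(x, y). vector_derivative (\<lambda>t. f (x, t)) (at y))"

fun partials :: "bool list \<Rightarrow> (real \<times> real \<Rightarrow> complex) \<Rightarrow> (real \<times> real \<Rightarrow> complex)" where
  "partials [] f = f"
| "partials (b # bs) f = (if b then partial1 else partial2) (partials bs f)"

definition schwartz :: "(real \<times> real \<Rightarrow> complex) \<Rightarrow> bool" where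
  "schwartz f \<longleftrightarrow>
     (\<forall>ds. continuous_on UNIV (partials ds f)
        \<and> (\<forall>x y. (\<lambda>t. partials ds f (t, y)) differentiable (at x)
                 \<and> (\<lambda>t. partials ds f (x, t)) differentiable (at y))
        \<and> (\<forall>m n::nat. bounded (range (\<lambda>(x, y). (x ^ m * y ^ n) *\<^sub>R partials ds f (x, y)))))"

definition fourier2 :: "(real \<times> real \<Rightarrow> complex) \<Rightarrow> (real \<times> real \<Rightarrow> complex)" where
  "fourier2 f = (\<lambda>(\<xi>, \<eta>). integral\<^sup>L lborel
      (\<lambda>(x, y). f (x, y) * cis (- 2 * pi * (x * \<xi> + y * \<eta>))))"

definition W_inner :: "real \<Rightarrow> real \<Rightarrow> (real \<times> real \<Rightarrow> complex) \<Rightarrow> (real \<times> real \<Rightarrow> complex) \<Rightarrow> complex" where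
  "W_inner \<alpha> \<beta> f g = integral\<^sup>L lborel
      (\<lambda>(\<xi>, \<eta>). fourier2 f (\<xi>, \<eta>) * cnj (fourier2 g (\<xi>, \<eta>))
          * complex_of_real (\<bar>\<xi>\<bar> powr (2 * \<alpha>) * \<bar>\<eta>\<bar> powr (2 * \<beta>)))"

definition L1norm :: "(real \<times> real \<Rightarrow> complex) \<Rightarrow> real" where
  "L1norm h = integral\<^sup>L lborel (\<lambda>p. norm (h p))"

definition BE :: "nat \<Rightarrow> nat \<Rightarrow> real \<Rightarrow> real \<Rightarrow> complex \<Rightarrow> complex \<Rightarrow> bool" where
  "BE k l \<alpha> \<beta> \<sigma> \<tau> \<longleftrightarrow>
     (\<exists>C. \<forall>f g. schwartz f \<longrightarrow> schwartz g \<longrightarrow>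
        norm (W_inner \<alpha> \<beta> f g)
          \<le> C * L1norm (\<lambda>p. (partial1 ^^ k) f p - \<tau> * (partial2 ^^ l) f p)
              * L1norm (\<lambda>p. (partial1 ^^ k) g p - \<sigma> * (partial2 ^^ l) g p))"

end

theory Submission
  imports Defs "HOL-Probability.Sinc_Integral" "HOL-Real_Asymp.Real_Asymp"
begin

text \<open>Write \<open>M\<^sub>t f = \<partial>\<^sub>1\<^sup>k f - t \<partial>\<^sub>2\<^sup>l f\<close> (\<open>mixed_op k l t f\<close>). Since \<open>\<partial>\<^sub>1\<close> and \<open>\<partial>\<^sub>2\<close>
  commute on Schwartz functions, \<open>M\<^sub>t (M\<^sub>-\<^sub>t f) = \<partial>\<^sub>1\<^sup>2\<^sup>k f - t\<^sup>2 \<partial>\<^sub>2\<^sup>2\<^sup>l f\<close>, so the four hypotheses,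
  applied to \<open>M\<^sub>\<plusminus>\<^sub>\<tau> f\<close> and \<open>M\<^sub>\<plusminus>\<^sub>\<sigma> g\<close>, bound all four products
  \<open>\<langle>M\<^sub>\<plusminus>\<^sub>\<tau> f, M\<^sub>\<plusminus>\<^sub>\<sigma> g\<rangle>\<close> by the \<open>L\<^sub>1\<close> norms occurring in the conclusion. Both
  \<open>\<partial>\<^sub>1\<^sup>k f = (M\<^sub>\<tau> f + M\<^sub>-\<^sub>\<tau> f) / 2\<close> and \<open>\<partial>\<^sub>2\<^sup>l f = (M\<^sub>-\<^sub>\<tau> f - M\<^sub>\<tau> f) / (2\<tau>)\<close> are combinations
  of these, so sesquilinearity bounds \<open>\<langle>\<partial>\<^sub>1\<^sup>k f, \<partial>\<^sub>1\<^sup>k g\<rangle>\<close> and \<open>\<langle>\<partial>\<^sub>2\<^sup>l f, \<partial>\<^sub>2\<^sup>l g\<rangle>\<close> in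
  \<open>W\<^sup>\<alpha>\<^sup>,\<^sup>\<beta>\<close>. On the Fourier side \<open>\<partial>\<^sub>1\<close> is multiplication by \<open>2\<pi>i\<xi>\<close>, hence
  \<open>\<langle>\<partial>\<^sub>1\<^sup>k f, \<partial>\<^sub>1\<^sup>k g\<rangle>\<^sub>\<alpha>\<^sub>,\<^sub>\<beta> = (2\<pi>)\<^sup>2\<^sup>k \<langle>f, g\<rangle>\<^sub>\<alpha>\<^sub>+\<^sub>k\<^sub>,\<^sub>\<beta>\<close>, and likewise for \<open>\<partial>\<^sub>2\<close>.\<close>

section \<open>The Schwartz class\<close>

lemma partials_append: "partials (ds @ es) f = partials ds (partials es f)"
  by (induction ds) auto

lemma funpow_partial1_eq_partials: "(partial1 ^^ k) f = partials (replicate k True) f"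
  by (induction k) auto

lemma funpow_partial2_eq_partials: "(partial2 ^^ k) f = partials (replicate k False) f"
  by (induction k) auto

lemma schwartz_partials: "schwartz f \<Longrightarrow> schwartz (partials es f)"
  unfolding schwartz_def partials_append[symmetric] by blast

lemma schwartz_funpow_partial1: "schwartz f \<Longrightarrow> schwartz ((partial1 ^^ k) f)"
  by (simp add: funpow_partial1_eq_partials schwartz_partials)

lemma schwartz_funpow_partial2: "schwartz f \<Longrightarrow> schwartz ((partial2 ^^ k) f)"
  by (simp add: funpow_partial2_eq_partials schwartz_partials)

lemma schwartzD:
  assumes "schwartz f"
  shows "continuous_on UNIV (partials ds f)"
    and "(\<lambda>t. partials ds f (t, y)) differentiable (at x)"
    and "(\<lambda>t. partials ds f (x, t)) differentiable (at y)"
    and "bounded (range (\<lambda>(x, y). (x ^ m * y ^ n) *\<^sub>R partials ds f (x, y)))"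
  using assms unfolding schwartz_def by blast+

lemma has_vector_derivative_partial1:
  "schwartz f \<Longrightarrow> ((\<lambda>t. partials ds f (t, y)) has_vector_derivative partial1 (partials ds f) (x, y)) (at x)"
  unfolding partial1_def by (simp add: vector_derivative_works[symmetric] schwartzD)

lemma has_vector_derivative_partial2:
  "schwartz f \<Longrightarrow> ((\<lambda>t. partials ds f (x, t)) has_vector_derivative partial2 (partials ds f) (x, y)) (at y)"
  unfolding partial2_def by (simp add: vector_derivative_works[symmetric] schwartzD)

lemma vector_derivative_linear_comb:
  fixes u v :: "real \<Rightarrow> 'a::real_normed_field"
  assumes "u differentiable (at x)" and "v differentiable (at x)"
  shows "vector_derivative (\<lambda>t. a * u t + b * v t) (at x)
       = a * vector_derivative u (at x) + b * vector_derivative v (at x)"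
proof -
  have "((\<lambda>t. a * u t + b * v t) has_vector_derivative
      a * vector_derivative u (at x) + b * vector_derivative v (at x)) (at x)"
    using assms by (intro has_vector_derivative_add has_vector_derivative_mult_right)
      (simp_all add: vector_derivative_works[symmetric])
  then show ?thesis by (rule vector_derivative_at)
qed

lemma partials_linear_comb:
  assumes f: "schwartz f" and g: "schwartz g"
  shows "partials ds (\<lambda>p. a * f p + b * g p) = (\<lambda>p. a * partials ds f p + b * partials ds g p)"
proof (induction ds)
  case (Cons d ds)
  then show ?case
    by (auto simp: fun_eq_iff partial1_def partial2_def vector_derivative_linear_comb
        schwartzD[OF f] schwartzD[OF g])
qed simp

lemma funpow_partial1_linear_comb:
  "schwartz f \<Longrightarrow> schwartz g \<Longrightarrow>
    (partial1 ^^ k) (\<lambda>p. a * f p + b * g p) = (\<lambda>p. a * (partial1 ^^ k) f p + b * (partial1 ^^ k) g p)"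
  by (simp add: funpow_partial1_eq_partials partials_linear_comb)

lemma funpow_partial2_linear_comb:
  "schwartz f \<Longrightarrow> schwartz g \<Longrightarrow>
    (partial2 ^^ k) (\<lambda>p. a * f p + b * g p) = (\<lambda>p. a * (partial2 ^^ k) f p + b * (partial2 ^^ k) g p)"
  by (simp add: funpow_partial2_eq_partials partials_linear_comb)

lemma bounded_range_linear_comb:
  fixes F G :: "'a \<Rightarrow> 'b::real_normed_field"
  assumes "bounded (range F)" and "bounded (range G)"
  shows "bounded (range (\<lambda>p. a * F p + b * G p))"
proof -
  obtain A B where A: "\<And>p. norm (F p) \<le> A" and B: "\<And>p. norm (G p) \<le> B"
    using assms by (auto simp: bounded_iff)
  have "norm (a * F p + b * G p) \<le> norm a * A + norm b * B" for p
    using norm_triangle_ineq[of "a * F p" "b * G p"]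
      mult_left_mono[OF A[of p], of "norm a"] mult_left_mono[OF B[of p], of "norm b"]
    by (simp add: norm_mult)
  then show ?thesis by (auto simp: bounded_iff)
qed

lemma schwartz_linear_comb:
  assumes f: "schwartz f" and g: "schwartz g"
  shows "schwartz (\<lambda>p. a * f p + b * g p)"
  unfolding schwartz_def partials_linear_comb[OF assms]
proof (intro allI conjI)
  fix ds and x y :: real
  show "continuous_on UNIV (\<lambda>p. a * partials ds f p + b * partials ds g p)"
    using schwartzD(1)[OF f] schwartzD(1)[OF g] by (intro continuous_intros)
  show "(\<lambda>t. a * partials ds f (t, y) + b * partials ds g (t, y)) differentiable at x"
    using schwartzD(2)[OF f] schwartzD(2)[OF g] by (intro derivative_intros)
  show "(\<lambda>t. a * partials ds f (x, t) + b * partials ds g (x, t)) differentiable at y"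
    using schwartzD(3)[OF f] schwartzD(3)[OF g] by (intro derivative_intros)
next
  fix ds and m n :: nat
  have "(\<lambda>(x, y). (x ^ m * y ^ n) *\<^sub>R (a * partials ds f (x, y) + b * partials ds g (x, y)))
     = (\<lambda>p. a * (case p of (x, y) \<Rightarrow> (x ^ m * y ^ n) *\<^sub>R partials ds f (x, y))
          + b * (case p of (x, y) \<Rightarrow> (x ^ m * y ^ n) *\<^sub>R partials ds g (x, y)))"
    by (auto simp: fun_eq_iff scaleR_conv_of_real algebra_simps)
  then show "bounded (range (\<lambda>(x, y). (x ^ m * y ^ n) *\<^sub>R
      (a * partials ds f (x, y) + b * partials ds g (x, y))))"
    by (simp add: bounded_range_linear_comb schwartzD(4)[OF f] schwartzD(4)[OF g])
qed

section \<open>Symmetry of mixed partial derivatives\<close>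

lemma norm_diff_le_of_vector_derivative:
  fixes u u' :: "real \<Rightarrow> 'a::real_normed_vector"
  assumes "\<And>t. t \<in> closed_segment a b \<Longrightarrow> (u has_vector_derivative u' t) (at t)"
    and "\<And>t. t \<in> closed_segment a b \<Longrightarrow> norm (u' t) \<le> B"
  shows "norm (u b - u a) \<le> B * \<bar>b - a\<bar>"
proof -
  have "norm (u b - u a) \<le> B * norm (b - a)"
  proof (rule differentiable_bound[of "closed_segment a b" u "\<lambda>t h. h *\<^sub>R u' t"])
    show "(u has_derivative (\<lambda>h. h *\<^sub>R u' t)) (at t within closed_segment a b)"
      if "t \<in> closed_segment a b" for t
      using assms(1)[OF that] by (auto simp: has_vector_derivative_def intro: has_derivative_at_withinI)
    show "onorm (\<lambda>h. h *\<^sub>R u' t) \<le> B" if "t \<in> closed_segment a b" for t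
      using assms(2)[OF that] by (auto intro!: onorm_le) (metis abs_ge_zero mult.commute mult_left_mono)
  qed auto
  then show ?thesis by simp
qed

text \<open>Two applications of the mean value inequality, first in the second and then in the
  first variable, each to the function minus its linearisation at the base point.\<close>
lemma second_difference_approx:
  fixes F Fx Fxy :: "real \<Rightarrow> real \<Rightarrow> 'a::real_normed_field"
  assumes d1: "\<And>s t. ((\<lambda>s. F s t) has_vector_derivative Fx s t) (at s)"
    and d2: "\<And>s t. ((\<lambda>t. Fx s t) has_vector_derivative Fxy s t) (at t)"
    and near: "\<And>s t. \<bar>s - a\<bar> < d \<Longrightarrow> \<bar>t - b\<bar> < d \<Longrightarrow> norm (Fxy s t - D) \<le> e"
    and h: "\<bar>h\<bar> < d"
  shows "norm (F (a+h) (b+h) - F (a+h) b - F a (b+h) + F a b - of_real (h\<^sup>2) * D)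
       \<le> e * h\<^sup>2"
proof -
  have seg: "\<bar>u - a\<bar> \<le> \<bar>h\<bar>" if "u \<in> closed_segment a (a + h)" for u a :: real
    using that by (auto simp: closed_segment_eq_real_ivl split: if_splits)
  have inner: "norm (Fx s (b+h) - Fx s b - of_real h * D) \<le> e * \<bar>h\<bar>" if s: "\<bar>s - a\<bar> < d" for s
  proof -
    have "norm ((Fx s (b+h) - of_real (b+h) * D) - (Fx s b - of_real b * D)) \<le> e * \<bar>(b + h) - b\<bar>"
    proof (rule norm_diff_le_of_vector_derivative[where u'="\<lambda>t. Fxy s t - D"])
      fix t assume t: "t \<in> closed_segment b (b + h)"
      show "((\<lambda>t. Fx s t - of_real t * D) has_vector_derivative Fxy s t - D) (at t)"
        using d2[where s=s and t=t] by (auto intro!: derivative_eq_intros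
            simp: has_vector_derivative_def scaleR_conv_of_real fun_eq_iff algebra_simps)
      show "norm (Fxy s t - D) \<le> e"
        using near[OF s] seg[OF t] h by simp
    qed
    then show ?thesis by (simp add: algebra_simps)
  qed
  have "norm ((F (a+h) (b+h) - F (a+h) b - of_real (a+h) * (of_real h * D))
         - (F a (b+h) - F a b - of_real a * (of_real h * D))) \<le> (e * \<bar>h\<bar>) * \<bar>(a + h) - a\<bar>"
  proof (rule norm_diff_le_of_vector_derivative[where u'="\<lambda>s. Fx s (b+h) - Fx s b - of_real h * D"])
    fix s assume s: "s \<in> closed_segment a (a + h)"
    show "((\<lambda>s. F s (b + h) - F s b - of_real s * (of_real h * D)) has_vector_derivative
        Fx s (b + h) - Fx s b - of_real h * D) (at s)"
      using d1[where s=s and t="b+h"] d1[where s=s and t=b] by (auto intro!: derivative_eq_intros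
          simp: has_vector_derivative_def scaleR_conv_of_real fun_eq_iff algebra_simps)
    show "norm (Fx s (b + h) - Fx s b - of_real h * D) \<le> e * \<bar>h\<bar>"
      using inner seg[OF s] h by simp
  qed
  then show ?thesis
    by (simp add: algebra_simps power2_eq_square abs_mult_self_eq)
qed

lemma second_difference_tendsto:
  fixes F Fx Fxy :: "real \<Rightarrow> real \<Rightarrow> 'a::real_normed_field"
  assumes d1: "\<And>s t. ((\<lambda>s. F s t) has_vector_derivative Fx s t) (at s)"
    and d2: "\<And>s t. ((\<lambda>t. Fx s t) has_vector_derivative Fxy s t) (at t)"
    and cont: "isCont (\<lambda>p. Fxy (fst p) (snd p)) (a, b)"
  shows "((\<lambda>h. (F (a+h) (b+h) - F (a+h) b - F a (b+h) + F a b) / of_real (h\<^sup>2))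
           \<longlongrightarrow> Fxy a b) (at 0)"
proof (rule LIM_I)
  fix r :: real assume "r > 0"
  then obtain d where "d > 0" and d: "\<And>p. dist p (a, b) < d \<Longrightarrow> dist (Fxy (fst p) (snd p)) (Fxy a b) < r / 2"
    using cont unfolding continuous_at_eps_delta by (metis half_gt_zero fst_conv snd_conv)
  have near: "norm (Fxy s t - Fxy a b) \<le> r / 2" if "\<bar>s - a\<bar> < d / 2" "\<bar>t - b\<bar> < d / 2" for s t
  proof -
    have "dist (s, t) (a, b) \<le> \<bar>s - a\<bar> + \<bar>t - b\<bar>"
      using sqrt_sum_squares_le_sum_abs[of "s - a" "t - b"] by (simp add: dist_Pair_Pair dist_real_def)
    then show ?thesis using d[of "(s, t)"] that by (simp add: dist_norm)
  qed
  show "\<exists>s>0. \<forall>h. h \<noteq> 0 \<and> norm (h - 0) < s \<longrightarrow>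
      norm ((F (a+h) (b+h) - F (a+h) b - F a (b+h) + F a b) / of_real (h\<^sup>2) - Fxy a b) < r"
  proof (intro exI[of _ "d / 2"] conjI allI impI)
    fix h :: real assume h: "h \<noteq> 0 \<and> norm (h - 0) < d / 2"
    let ?\<Delta> = "F (a+h) (b+h) - F (a+h) b - F a (b+h) + F a b"
    have "norm (?\<Delta> - of_real (h\<^sup>2) * Fxy a b) \<le> r / 2 * h\<^sup>2"
      using second_difference_approx[OF d1 d2, where a=a and b=b and d="d / 2", OF near] h
      by (simp add: of_real_power)
    moreover have "?\<Delta> / of_real (h\<^sup>2) - Fxy a b = (?\<Delta> - of_real (h\<^sup>2) * Fxy a b) / of_real (h\<^sup>2)"
      using h by (simp add: field_simps)
    ultimately have "norm (?\<Delta> / of_real (h\<^sup>2) - Fxy a b) \<le> r / 2"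
      using h by (simp add: norm_divide norm_power pos_divide_le_eq)
    then show "norm (?\<Delta> / of_real (h\<^sup>2) - Fxy a b) < r"
      using \<open>r > 0\<close> by simp
  qed (use \<open>d > 0\<close> in simp)
qed

text \<open>Both mixed partials are limits of the same second difference quotient.\<close>
lemma partial1_partial2_commute:
  assumes f: "schwartz f"
  shows "partial1 (partial2 f) = partial2 (partial1 f)"
proof (rule ext, clarify)
  fix x0 y0
  let ?\<Delta> = "\<lambda>h. (f (x0+h, y0+h) - f (x0+h, y0) - f (x0, y0+h) + f (x0, y0)) / of_real (h\<^sup>2)"
  have "isCont (partials [False, True] f) (x0, y0)" "isCont (partials [True, False] f) (x0, y0)"
    using schwartzD(1)[OF f, of "[False, True]"] schwartzD(1)[OF f, of "[True, False]"]
    by (simp_all add: continuous_on_eq_continuous_at)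
  then have c12: "isCont (\<lambda>p. partial2 (partial1 f) (fst p, snd p)) (x0, y0)"
    and c21: "isCont (\<lambda>p. partial1 (partial2 f) (snd p, fst p)) (y0, x0)"
    by (auto intro!: continuous_at_compose[of _ "\<lambda>p. (snd p, fst p)", unfolded o_def]
        continuous_intros)
  have "(?\<Delta> \<longlongrightarrow> partial2 (partial1 f) (x0, y0)) (at 0)"
    by (rule second_difference_tendsto[where F="\<lambda>s t. f (s, t)" and Fx="\<lambda>s t. partial1 f (s, t)"])
      (use has_vector_derivative_partial1[OF f, of "[]"]
        has_vector_derivative_partial2[OF f, of "[True]"] c12 in auto)
  moreover have "((\<lambda>h. (f (x0+h, y0+h) - f (x0, y0+h) - f (x0+h, y0) + f (x0, y0)) / of_real (h\<^sup>2))
      \<longlongrightarrow> partial1 (partial2 f) (x0, y0)) (at 0)"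
    by (rule second_difference_tendsto[where F="\<lambda>s t. f (t, s)" and Fx="\<lambda>s t. partial2 f (t, s)"
          and Fxy="\<lambda>s t. partial1 (partial2 f) (t, s)" and a=y0 and b=x0])
      (use has_vector_derivative_partial2[OF f, of "[]"]
        has_vector_derivative_partial1[OF f, of "[False]"] c21 in auto)
  then have "(?\<Delta> \<longlongrightarrow> partial1 (partial2 f) (x0, y0)) (at 0)"
    by (simp add: algebra_simps)
  ultimately have "partial2 (partial1 f) (x0, y0) = partial1 (partial2 f) (x0, y0)"
    by (rule tendsto_unique[OF at_neq_bot])
  then show "partial1 (partial2 f) (x0, y0) = partial2 (partial1 f) (x0, y0)" ..
qed

lemma partial1_funpow_partial2_commute:
  "schwartz f \<Longrightarrow> partial1 ((partial2 ^^ l) f) = (partial2 ^^ l) (partial1 f)"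
proof (induction l arbitrary: f)
  case (Suc l)
  then show ?case
    using partial1_partial2_commute[OF schwartz_funpow_partial2[OF Suc.prems]] by simp
qed simp

lemma funpow_partial1_partial2_commute:
  assumes "schwartz f"
  shows "(partial1 ^^ k) ((partial2 ^^ l) f) = (partial2 ^^ l) ((partial1 ^^ k) f)"
  by (induction k)
    (simp_all add: partial1_funpow_partial2_commute[OF schwartz_funpow_partial1[OF assms]])

section \<open>Decay and integrability\<close>

definition decay_weight :: "real \<times> real \<Rightarrow> real" where
  "decay_weight p = inverse (1 + (fst p)\<^sup>2) * inverse (1 + (snd p)\<^sup>2)"

lemma decay_weight_pos: "decay_weight p > 0"
  unfolding decay_weight_def by (simp add: add_pos_nonneg)

lemma borel_measurable_decay_weight[measurable]: "decay_weight \<in> borel_measurable borel"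
  unfolding decay_weight_def
  by (intro borel_measurable_continuous_onI) (auto intro!: continuous_intros simp: add_nonneg_eq_0_iff)

lemma integrable_inverse_1_plus_square_lborel: "integrable lborel (\<lambda>x::real. inverse (1 + x\<^sup>2))"
  using integrable_inverse_1_plus_square by (simp add: set_integrable_def einterval_def)

lemma integrable_decay_weight: "integrable lborel decay_weight"
proof -
  let ?a = "\<lambda>x::real. inverse (1 + x\<^sup>2)"
  have [measurable]: "?a \<in> borel_measurable borel"
    by (intro borel_measurable_continuous_onI) (auto intro!: continuous_intros simp: add_nonneg_eq_0_iff)
  have fin: "(\<integral>\<^sup>+x. ennreal (?a x) \<partial>lborel) < \<infinity>"
    using integrable_inverse_1_plus_square_lborel unfolding integrable_iff_bounded
    by (simp add: add_nonneg_eq_0_iff)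
  have "(\<integral>\<^sup>+p. ennreal (decay_weight p) \<partial>(lborel \<Otimes>\<^sub>M lborel))
      = (\<integral>\<^sup>+x. \<integral>\<^sup>+y. ennreal (decay_weight (x, y)) \<partial>lborel \<partial>lborel)"
    by (rule lborel.nn_integral_fst[symmetric]) (simp add: lborel_prod)
  also have "\<dots> = (\<integral>\<^sup>+x. ennreal (?a x) * (\<integral>\<^sup>+y. ennreal (?a y) \<partial>lborel) \<partial>lborel)"
    by (intro nn_integral_cong)
      (simp add: decay_weight_def ennreal_mult' nn_integral_cmult add_nonneg_eq_0_iff)
  also have "\<dots> = (\<integral>\<^sup>+x. ennreal (?a x) \<partial>lborel) * (\<integral>\<^sup>+y. ennreal (?a y) \<partial>lborel)"
    by (simp add: nn_integral_multc)
  also have "\<dots> < \<infinity>" using fin by (simp add: ennreal_mult_less_top)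
  finally show ?thesis
    by (intro integrableI_nonneg) (auto intro: less_imp_le decay_weight_pos simp: lborel_prod)
qed

lemma schwartz_decay:
  assumes "schwartz f"
  obtains M where "\<And>p. norm (partials ds f p) \<le> M * decay_weight p"
proof -
  have "\<exists>B. \<forall>x y. \<bar>x\<bar>^m * \<bar>y\<bar>^n * norm (partials ds f (x, y)) \<le> B" for m n
    using schwartzD(4)[OF assms, where ds=ds and m=m and n=n]
    by (force simp: bounded_iff abs_mult power_abs)
  then obtain B00 B20 B02 B22 where B:
    "\<And>x y. \<bar>x\<bar>^0 * \<bar>y\<bar>^0 * norm (partials ds f (x, y)) \<le> B00"
    "\<And>x y. \<bar>x\<bar>^2 * \<bar>y\<bar>^0 * norm (partials ds f (x, y)) \<le> B20"
    "\<And>x y. \<bar>x\<bar>^0 * \<bar>y\<bar>^2 * norm (partials ds f (x, y)) \<le> B02"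
    "\<And>x y. \<bar>x\<bar>^2 * \<bar>y\<bar>^2 * norm (partials ds f (x, y)) \<le> B22"
    by meson
  have "(1 + x\<^sup>2) * (1 + y\<^sup>2) * norm (partials ds f (x, y)) \<le> B00 + B20 + B02 + B22" for x y
    using B[of x y] by (simp add: algebra_simps)
  then have "norm (partials ds f p) \<le> (B00 + B20 + B02 + B22) * decay_weight p" for p
    by (cases p) (simp add: decay_weight_def field_simps add_pos_nonneg)
  then show thesis by (rule that)
qed

lemma borel_measurable_schwartz_partials[measurable]:
  "schwartz f \<Longrightarrow> partials ds f \<in> borel_measurable borel"
  using borel_measurable_continuous_onI[OF schwartzD(1)] by simp

lemma integrable_schwartz_mult_bounded:
  assumes f: "schwartz f" and c: "c \<in> borel_measurable borel" "\<And>p. norm (c p) \<le> 1"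
  shows "integrable lborel (\<lambda>p. partials ds f p * c p)"
proof -
  obtain M where M: "\<And>p. norm (partials ds f p) \<le> M * decay_weight p"
    using schwartz_decay[OF f] by blast
  show ?thesis
  proof (rule Bochner_Integration.integrable_bound)
    show "integrable lborel (\<lambda>p. M * decay_weight p)"
      using integrable_decay_weight by simp
    show "AE p in lborel. norm (partials ds f p * c p) \<le> norm (M * decay_weight p)"
      using M c(2) by (intro AE_I2) (smt (verit) mult_left_le norm_ge_zero norm_mult real_norm_def)
  qed (use f c(1) in measurable)
qed

section \<open>Fourier transforms of derivatives\<close>

lemma tendsto_zero_of_inverse_square_bound:
  fixes v :: "real \<Rightarrow> 'a::real_normed_vector"
  assumes "\<And>x. norm (v x) \<le> K * inverse (1 + x\<^sup>2)"
  shows "(v \<longlongrightarrow> 0) at_top" and "(v \<longlongrightarrow> 0) at_bot"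
proof -
  have bound: "\<forall>x. norm (v x) \<le> K * inverse (1 + x\<^sup>2)"
    using assms by blast
  show "(v \<longlongrightarrow> 0) at_top" "(v \<longlongrightarrow> 0) at_bot"
    by (rule Lim_null_comparison[OF always_eventually[OF bound]], real_asymp)+
qed

lemma integrable_mult_cis_of_inverse_square_bound:
  fixes v :: "real \<Rightarrow> complex"
  assumes "continuous_on UNIV v" and "\<And>x. norm (v x) \<le> K * inverse (1 + x\<^sup>2)"
  shows "integrable lborel (\<lambda>x. v x * cis (c * x + b))"
proof (rule Bochner_Integration.integrable_bound)
  show "integrable lborel (\<lambda>x. K * inverse (1 + x\<^sup>2))"
    using integrable_inverse_1_plus_square_lborel by simp
  have "continuous_on UNIV (\<lambda>x. v x * cis (c * x + b))"
    using assms(1) by (intro continuous_intros)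
  then show "(\<lambda>x. v x * cis (c * x + b)) \<in> borel_measurable lborel"
    using borel_measurable_continuous_onI by simp
  have "norm (v x * cis (c * x + b)) \<le> norm (K * inverse (1 + x\<^sup>2))" for x
    using assms(2)[of x] by (simp add: norm_mult)
  then show "AE x in lborel. norm (v x * cis (c * x + b)) \<le> norm (K * inverse (1 + x\<^sup>2))"
    by simp
qed

lemma integral_vector_derivative_mult_cis:
  fixes u u' :: "real \<Rightarrow> complex"
  assumes der: "\<And>x. (u has_vector_derivative u' x) (at x)"
    and cont: "continuous_on UNIV u'"
    and decay: "\<And>x. norm (u x) \<le> K * inverse (1 + x\<^sup>2)" "\<And>x. norm (u' x) \<le> K' * inverse (1 + x\<^sup>2)"
  shows "(\<integral>x. u' x * cis (c * x + b) \<partial>lborel) = - (\<i> * c) * (\<integral>x. u x * cis (c * x + b) \<partial>lborel)"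
proof -
  have cont_u: "continuous_on UNIV u"
    using der by (meson continuous_at_imp_continuous_on has_vector_derivative_continuous)
  note int = integrable_mult_cis_of_inverse_square_bound[OF cont decay(2)]
    integrable_mult_cis_of_inverse_square_bound[OF cont_u decay(1)]
  have "norm (u x * cis (c * x + b)) \<le> K * inverse (1 + x\<^sup>2)" for x
    using decay(1)[of x] by (simp add: norm_mult)
  note lim = tendsto_zero_of_inverse_square_bound[OF this]
  define H' where "H' x = u' x * cis (c * x + b) + (\<i> * c) * (u x * cis (c * x + b))" for x
  have "(LBINT x=-\<infinity>..\<infinity>. H' x) = 0 - 0"
  proof (rule interval_integral_FTC_integrable[where F="\<lambda>x. u x * cis (c * x + b)"])
    show "((\<lambda>x. u x * cis (c * x + b)) has_vector_derivative H' x) (at x)" for x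
      using der[of x] unfolding H'_def has_vector_derivative_def
      by (auto intro!: derivative_eq_intros simp: algebra_simps scaleR_conv_of_real fun_eq_iff)
    have "continuous_on UNIV H'"
      unfolding H'_def using cont cont_u by (intro continuous_intros)
    then show "isCont H' x" for x
      by (simp add: continuous_on_eq_continuous_at)
    show "set_integrable lborel (einterval (- \<infinity>) \<infinity>) H'"
      unfolding H'_def set_integrable_def einterval_def using int by simp
    show "(((\<lambda>x. u x * cis (c * x + b)) \<circ> real_of_ereal) \<longlongrightarrow> 0) (at_right (- \<infinity>))"
      "(((\<lambda>x. u x * cis (c * x + b)) \<circ> real_of_ereal) \<longlongrightarrow> 0) (at_left \<infinity>)"
      using lim by (simp_all add: ereal_tendsto_simps)
  qed auto
  then have "(\<integral>x. H' x \<partial>lborel) = 0"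
    by (simp add: interval_lebesgue_integral_def set_lebesgue_integral_def einterval_def)
  moreover have "(\<integral>x. H' x \<partial>lborel) = (\<integral>x. u' x * cis (c * x + b) \<partial>lborel)
      + (\<i> * c) * (\<integral>x. u x * cis (c * x + b) \<partial>lborel)"
    unfolding H'_def using int by simp
  ultimately show ?thesis by (simp add: eq_neg_iff_add_eq_0)
qed

definition fourier_kernel :: "real \<times> real \<Rightarrow> real \<times> real \<Rightarrow> complex" where
  "fourier_kernel q p = cis (- 2 * pi * (fst p * fst q + snd p * snd q))"

lemma fourier2_eq_integral_kernel: "fourier2 f q = (\<integral>p. f p * fourier_kernel q p \<partial>lborel)"
  by (cases q) (simp add: fourier2_def fourier_kernel_def case_prod_unfold)

lemma norm_fourier_kernel [simp]: "norm (fourier_kernel q p) = 1"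
  by (simp add: fourier_kernel_def)

lemma integrable_schwartz_kernel:
  assumes "schwartz f"
  shows "integrable (lborel \<Otimes>\<^sub>M lborel) (\<lambda>(x, y). partials ds f (x, y) * fourier_kernel q (x, y))"
proof -
  have "continuous_on UNIV (fourier_kernel q)"
    unfolding fourier_kernel_def by (intro continuous_intros)
  then have "integrable lborel (\<lambda>p. partials ds f p * fourier_kernel q p)"
    by (intro integrable_schwartz_mult_bounded[OF assms] borel_measurable_continuous_onI) simp_all
  then show ?thesis
    by (simp add: lborel_prod case_prod_unfold)
qed

lemma fourier2_partial1:
  assumes f: "schwartz f"
  shows "fourier2 (partial1 f) (\<xi>, \<eta>) = \<i> * of_real (2 * pi * \<xi>) * fourier2 f (\<xi>, \<eta>)"
proof -
  obtain M M' where M: "\<And>p. norm (partials [] f p) \<le> M * decay_weight p"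
    and M': "\<And>p. norm (partials [True] f p) \<le> M' * decay_weight p"
    using schwartz_decay[OF f] by metis
  have slice: "(\<integral>x. partial1 f (x, y) * fourier_kernel (\<xi>, \<eta>) (x, y) \<partial>lborel)
      = \<i> * of_real (2 * pi * \<xi>) * (\<integral>x. f (x, y) * fourier_kernel (\<xi>, \<eta>) (x, y) \<partial>lborel)" for y
  proof -
    have "(\<integral>x. partial1 f (x, y) * cis ((- 2 * pi * \<xi>) * x + (- 2 * pi * y * \<eta>)) \<partial>lborel)
        = - (\<i> * of_real (- 2 * pi * \<xi>)) * (\<integral>x. f (x, y) * cis ((- 2 * pi * \<xi>) * x + (- 2 * pi * y * \<eta>)) \<partial>lborel)"
    proof (rule integral_vector_derivative_mult_cis)
      show "((\<lambda>x. f (x, y)) has_vector_derivative partial1 f (x, y)) (at x)" for x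
        using has_vector_derivative_partial1[OF f, of "[]"] by simp
      show "continuous_on UNIV (\<lambda>x. partial1 f (x, y))"
        by (rule continuous_on_compose2[OF schwartzD(1)[OF f, of "[True]", simplified]]) (auto intro!: continuous_intros)
      show "norm (f (x, y)) \<le> (M * inverse (1 + y\<^sup>2)) * inverse (1 + x\<^sup>2)" for x
        using M[of "(x, y)"] by (simp add: decay_weight_def mult_ac)
      show "norm (partial1 f (x, y)) \<le> (M' * inverse (1 + y\<^sup>2)) * inverse (1 + x\<^sup>2)" for x
        using M'[of "(x, y)"] by (simp add: decay_weight_def mult_ac)
    qed
    then show ?thesis by (simp add: fourier_kernel_def algebra_simps)
  qed
  have "fourier2 (partial1 f) (\<xi>, \<eta>)
      = (\<integral>y. \<integral>x. partial1 f (x, y) * fourier_kernel (\<xi>, \<eta>) (x, y) \<partial>lborel \<partial>lborel)"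
    using lborel_pair.integral_snd[OF integrable_schwartz_kernel[OF f, of "[True]"]]
    by (simp add: fourier2_eq_integral_kernel lborel_prod case_prod_unfold)
  also have "\<dots> = \<i> * of_real (2 * pi * \<xi>) * (\<integral>y. \<integral>x. f (x, y) * fourier_kernel (\<xi>, \<eta>) (x, y) \<partial>lborel \<partial>lborel)"
    by (simp add: slice)
  also have "(\<integral>y. \<integral>x. f (x, y) * fourier_kernel (\<xi>, \<eta>) (x, y) \<partial>lborel \<partial>lborel) = fourier2 f (\<xi>, \<eta>)"
    using lborel_pair.integral_snd[OF integrable_schwartz_kernel[OF f, of "[]"]]
    by (simp add: fourier2_eq_integral_kernel lborel_prod case_prod_unfold)
  finally show ?thesis .
qed

lemma fourier2_partial2:
  assumes f: "schwartz f"
  shows "fourier2 (partial2 f) (\<xi>, \<eta>) = \<i> * of_real (2 * pi * \<eta>) * fourier2 f (\<xi>, \<eta>)"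
proof -
  obtain M M' where M: "\<And>p. norm (partials [] f p) \<le> M * decay_weight p"
    and M': "\<And>p. norm (partials [False] f p) \<le> M' * decay_weight p"
    using schwartz_decay[OF f] by metis
  have slice: "(\<integral>y. partial2 f (x, y) * fourier_kernel (\<xi>, \<eta>) (x, y) \<partial>lborel)
      = \<i> * of_real (2 * pi * \<eta>) * (\<integral>y. f (x, y) * fourier_kernel (\<xi>, \<eta>) (x, y) \<partial>lborel)" for x
  proof -
    have "(\<integral>y. partial2 f (x, y) * cis ((- 2 * pi * \<eta>) * y + (- 2 * pi * x * \<xi>)) \<partial>lborel)
        = - (\<i> * of_real (- 2 * pi * \<eta>)) * (\<integral>y. f (x, y) * cis ((- 2 * pi * \<eta>) * y + (- 2 * pi * x * \<xi>)) \<partial>lborel)"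
    proof (rule integral_vector_derivative_mult_cis)
      show "((\<lambda>y. f (x, y)) has_vector_derivative partial2 f (x, y)) (at y)" for y
        using has_vector_derivative_partial2[OF f, of "[]"] by simp
      show "continuous_on UNIV (\<lambda>y. partial2 f (x, y))"
        by (rule continuous_on_compose2[OF schwartzD(1)[OF f, of "[False]", simplified]]) (auto intro!: continuous_intros)
      show "norm (f (x, y)) \<le> (M * inverse (1 + x\<^sup>2)) * inverse (1 + y\<^sup>2)" for y
        using M[of "(x, y)"] by (simp add: decay_weight_def mult_ac)
      show "norm (partial2 f (x, y)) \<le> (M' * inverse (1 + x\<^sup>2)) * inverse (1 + y\<^sup>2)" for y
        using M'[of "(x, y)"] by (simp add: decay_weight_def mult_ac)
    qed
    then show ?thesis by (simp add: fourier_kernel_def algebra_simps)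
  qed
  have "fourier2 (partial2 f) (\<xi>, \<eta>)
      = (\<integral>x. \<integral>y. partial2 f (x, y) * fourier_kernel (\<xi>, \<eta>) (x, y) \<partial>lborel \<partial>lborel)"
    using lborel_pair.integral_fst[OF integrable_schwartz_kernel[OF f, of "[False]"]]
    by (simp add: fourier2_eq_integral_kernel lborel_prod case_prod_unfold)
  also have "\<dots> = \<i> * of_real (2 * pi * \<eta>) * (\<integral>x. \<integral>y. f (x, y) * fourier_kernel (\<xi>, \<eta>) (x, y) \<partial>lborel \<partial>lborel)"
    by (simp add: slice)
  also have "(\<integral>x. \<integral>y. f (x, y) * fourier_kernel (\<xi>, \<eta>) (x, y) \<partial>lborel \<partial>lborel) = fourier2 f (\<xi>, \<eta>)"
    using lborel_pair.integral_fst[OF integrable_schwartz_kernel[OF f, of "[]"]]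
    by (simp add: fourier2_eq_integral_kernel lborel_prod case_prod_unfold)
  finally show ?thesis .
qed

lemma fourier2_funpow_partial1:
  "schwartz f \<Longrightarrow> fourier2 ((partial1 ^^ k) f) (\<xi>, \<eta>) = (\<i> * of_real (2 * pi * \<xi>)) ^ k * fourier2 f (\<xi>, \<eta>)"
  by (induction k) (simp_all add: fourier2_partial1 schwartz_funpow_partial1)

lemma fourier2_funpow_partial2:
  "schwartz f \<Longrightarrow> fourier2 ((partial2 ^^ k) f) (\<xi>, \<eta>) = (\<i> * of_real (2 * pi * \<eta>)) ^ k * fourier2 f (\<xi>, \<eta>)"
  by (induction k) (simp_all add: fourier2_partial2 schwartz_funpow_partial2)

lemma fourier2_linear_comb:
  assumes f: "schwartz f" and g: "schwartz g"
  shows "fourier2 (\<lambda>p. a * f p + b * g p) q = a * fourier2 f q + b * fourier2 g q"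
  using integrable_schwartz_kernel[OF f, of "[]" q] integrable_schwartz_kernel[OF g, of "[]" q]
  by (simp add: fourier2_eq_integral_kernel lborel_prod case_prod_unfold distrib_right mult.assoc)

lemma norm_fourier2_le_L1norm: "norm (fourier2 h q) \<le> L1norm h"
proof -
  have "norm (fourier2 h q) \<le> (\<integral>p. norm (h p * fourier_kernel q p) \<partial>lborel)"
    unfolding fourier2_eq_integral_kernel by (rule integral_norm_bound)
  then show ?thesis
    by (simp add: L1norm_def norm_mult)
qed

lemma fourier2_polynomial_decay:
  assumes "schwartz g"
  obtains C where "\<And>\<xi> \<eta>. (1 + \<bar>\<xi>\<bar>^a) * (1 + \<bar>\<eta>\<bar>^b) * norm (fourier2 g (\<xi>, \<eta>)) \<le> C"
proof -
  have monomial: "\<bar>\<xi>\<bar>^m * \<bar>\<eta>\<bar>^n * norm (fourier2 g (\<xi>, \<eta>))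
      \<le> L1norm ((partial1 ^^ m) ((partial2 ^^ n) g)) / (2 * pi) ^ (m + n)" for m n \<xi> \<eta>
  proof -
    have "(2 * pi) ^ (m + n) * (\<bar>\<xi>\<bar>^m * \<bar>\<eta>\<bar>^n * norm (fourier2 g (\<xi>, \<eta>)))
        = norm (fourier2 ((partial1 ^^ m) ((partial2 ^^ n) g)) (\<xi>, \<eta>))"
      by (simp add: fourier2_funpow_partial1 fourier2_funpow_partial2 schwartz_funpow_partial2 assms
          norm_mult norm_power abs_mult power_mult_distrib power_add mult_ac)
    also have "\<dots> \<le> L1norm ((partial1 ^^ m) ((partial2 ^^ n) g))"
      by (rule norm_fourier2_le_L1norm)
    finally show ?thesis by (simp add: field_simps)
  qed
  let ?L = "\<lambda>m n. L1norm ((partial1 ^^ m) ((partial2 ^^ n) g)) / (2 * pi) ^ (m + n)"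
  have "(1 + \<bar>\<xi>\<bar>^a) * (1 + \<bar>\<eta>\<bar>^b) * norm (fourier2 g (\<xi>, \<eta>)) \<le> ?L 0 0 + ?L a 0 + ?L 0 b + ?L a b"
    for \<xi> \<eta>
    using monomial[where m=0 and n=0 and \<xi>=\<xi> and \<eta>=\<eta>] monomial[where m=a and n=0 and \<xi>=\<xi> and \<eta>=\<eta>]
      monomial[where m=0 and n=b and \<xi>=\<xi> and \<eta>=\<eta>] monomial[where m=a and n=b and \<xi>=\<xi> and \<eta>=\<eta>]
    by (simp add: algebra_simps)
  then show thesis by (rule that)
qed

lemma borel_measurable_fourier2:
  assumes "schwartz g"
  shows "fourier2 g \<in> borel_measurable borel"
proof -
  have "continuous_on UNIV (\<lambda>(q, p). g p * fourier_kernel q p)"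
    using schwartzD(1)[OF assms, of "[]"] unfolding fourier_kernel_def case_prod_unfold
    by (auto intro!: continuous_intros continuous_on_compose2[of UNIV g])
  then have "(\<lambda>(q, p). g p * fourier_kernel q p) \<in> borel_measurable (lborel \<Otimes>\<^sub>M lborel)"
    using borel_measurable_continuous_onI by (simp add: lborel_prod)
  then have "(\<lambda>q. \<integral>p. g p * fourier_kernel q p \<partial>lborel) \<in> borel_measurable lborel"
    by (rule lborel.borel_measurable_lebesgue_integral)
  then show ?thesis
    by (simp add: fourier2_eq_integral_kernel[abs_def])
qed

section \<open>The homogeneous Sobolev form\<close>

definition W_weight :: "real \<Rightarrow> real \<Rightarrow> real \<times> real \<Rightarrow> real" where
  "W_weight \<alpha> \<beta> q = \<bar>fst q\<bar> powr (2 * \<alpha>) * \<bar>snd q\<bar> powr (2 * \<beta>)"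

lemma W_inner_eq:
  "W_inner \<alpha> \<beta> f g = (\<integral>q. fourier2 f q * cnj (fourier2 g q) * of_real (W_weight \<alpha> \<beta> q) \<partial>lborel)"
  by (simp add: W_inner_def W_weight_def case_prod_unfold)

lemma borel_measurable_W_weight[measurable]: "W_weight \<alpha> \<beta> \<in> borel_measurable borel"
  unfolding W_weight_def
  by (intro borel_measurable_times measurable_abs_powr) (auto intro!: borel_measurable_continuous_onI continuous_intros)

lemma abs_powr_le_polynomial:
  fixes t a :: real
  assumes "a \<ge> 0"
  shows "\<bar>t\<bar> powr a \<le> 4 * (1 + \<bar>t\<bar>^(nat \<lceil>a\<rceil> + 2)) * inverse (1 + t\<^sup>2)"
proof -
  have "\<bar>t\<bar> powr a * (1 + t\<^sup>2) \<le> 4 * (1 + \<bar>t\<bar>^(nat \<lceil>a\<rceil> + 2))"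
  proof (cases "\<bar>t\<bar> \<le> 1")
    case True
    then have "\<bar>t\<bar> powr a \<le> 1" and "t\<^sup>2 \<le> 1"
      using assms powr_mono2[of a "\<bar>t\<bar>" 1] by (simp_all add: abs_square_le_1)
    then have "\<bar>t\<bar> powr a * (1 + t\<^sup>2) \<le> 1 * 2"
      by (intro mult_mono) auto
    then show ?thesis by (smt (verit) zero_le_power abs_ge_zero)
  next
    case False
    have "\<bar>t\<bar> powr a \<le> \<bar>t\<bar> powr (real (nat \<lceil>a\<rceil>))"
      using False assms by (intro powr_mono) linarith+
    also have "\<dots> = \<bar>t\<bar> ^ nat \<lceil>a\<rceil>"
      using False by (simp add: powr_realpow)
    finally have "\<bar>t\<bar> powr a * (1 + t\<^sup>2) \<le> \<bar>t\<bar> ^ nat \<lceil>a\<rceil> * (2 * \<bar>t\<bar>\<^sup>2)"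
      using False abs_square_less_1[of t] by (intro mult_mono) (auto simp: power2_eq_square)
    also have "\<dots> = 2 * \<bar>t\<bar>^(nat \<lceil>a\<rceil> + 2)"
      by (simp add: power_add power2_eq_square)
    also have "\<dots> \<le> 4 * (1 + \<bar>t\<bar>^(nat \<lceil>a\<rceil> + 2))"
      by simp
    finally show ?thesis .
  qed
  then show ?thesis
    by (simp add: field_simps add_pos_nonneg)
qed

lemma W_weight_le_decay_weight:
  assumes "\<alpha> \<ge> 0" and "\<beta> \<ge> 0"
  shows "W_weight \<alpha> \<beta> (\<xi>, \<eta>) \<le> 16 * ((1 + \<bar>\<xi>\<bar>^(nat \<lceil>2 * \<alpha>\<rceil> + 2)) * (1 + \<bar>\<eta>\<bar>^(nat \<lceil>2 * \<beta>\<rceil> + 2)))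
      * decay_weight (\<xi>, \<eta>)"
proof -
  have "W_weight \<alpha> \<beta> (\<xi>, \<eta>) \<le> (4 * (1 + \<bar>\<xi>\<bar>^(nat \<lceil>2 * \<alpha>\<rceil> + 2)) * inverse (1 + \<xi>\<^sup>2))
      * (4 * (1 + \<bar>\<eta>\<bar>^(nat \<lceil>2 * \<beta>\<rceil> + 2)) * inverse (1 + \<eta>\<^sup>2))"
    unfolding W_weight_def
    using mult_mono[OF abs_powr_le_polynomial[of "2 * \<alpha>" \<xi>] abs_powr_le_polynomial[of "2 * \<beta>" \<eta>]] assms
    by (simp add: add_pos_nonneg)
  then show ?thesis
    by (simp add: decay_weight_def algebra_simps)
qed

lemma fourier2_mult_W_weight_bound:
  assumes "schwartz g" and "\<alpha> \<ge> 0" and "\<beta> \<ge> 0"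
  obtains C where "\<And>q. norm (fourier2 g q) * W_weight \<alpha> \<beta> q \<le> C * decay_weight q"
proof -
  let ?P = "\<lambda>\<xi> \<eta>. (1 + \<bar>\<xi>\<bar>^(nat \<lceil>2 * \<alpha>\<rceil> + 2)) * (1 + \<bar>\<eta>\<bar>^(nat \<lceil>2 * \<beta>\<rceil> + 2))"
  obtain C where C: "\<And>\<xi> \<eta>. ?P \<xi> \<eta> * norm (fourier2 g (\<xi>, \<eta>)) \<le> C"
    using fourier2_polynomial_decay[OF assms(1)] by blast
  have "norm (fourier2 g (\<xi>, \<eta>)) * W_weight \<alpha> \<beta> (\<xi>, \<eta>) \<le> 16 * C * decay_weight (\<xi>, \<eta>)" for \<xi> \<eta>
  proof -
    have "norm (fourier2 g (\<xi>, \<eta>)) * W_weight \<alpha> \<beta> (\<xi>, \<eta>)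
        \<le> norm (fourier2 g (\<xi>, \<eta>)) * (16 * ?P \<xi> \<eta> * decay_weight (\<xi>, \<eta>))"
      by (intro mult_left_mono W_weight_le_decay_weight assms) simp
    also have "\<dots> = 16 * decay_weight (\<xi>, \<eta>) * (?P \<xi> \<eta> * norm (fourier2 g (\<xi>, \<eta>)))"
      by (simp add: mult_ac)
    also have "\<dots> \<le> 16 * decay_weight (\<xi>, \<eta>) * C"
      using decay_weight_pos by (intro mult_left_mono C) (simp add: less_imp_le)
    finally show ?thesis
      by (simp add: mult_ac)
  qed
  then show thesis
    by (intro that[of "16 * C"]) (metis prod.collapse)
qed

lemma integrable_W_inner:
  assumes f: "schwartz f" and g: "schwartz g" and "\<alpha> \<ge> 0" and "\<beta> \<ge> 0"
  shows "integrable lborel (\<lambda>q. fourier2 f q * cnj (fourier2 g q) * of_real (W_weight \<alpha> \<beta> q))"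
proof -
  obtain C where C: "\<And>q. norm (fourier2 g q) * W_weight \<alpha> \<beta> q \<le> C * decay_weight q"
    using fourier2_mult_W_weight_bound[OF g assms(3,4)] by blast
  have "norm (fourier2 f q) * (norm (fourier2 g q) * W_weight \<alpha> \<beta> q) \<le> L1norm f * (C * decay_weight q)" for q
    using norm_fourier2_le_L1norm[of f q] C[of q]
    by (rule mult_mono) (auto simp: L1norm_def W_weight_def)
  then have bound: "norm (fourier2 f q * cnj (fourier2 g q) * of_real (W_weight \<alpha> \<beta> q))
      \<le> L1norm f * C * decay_weight q" for q
    by (simp add: norm_mult W_weight_def mult.assoc)
  have [measurable]: "fourier2 f \<in> borel_measurable borel" "fourier2 g \<in> borel_measurable borel"
    using f g by (simp_all add: borel_measurable_fourier2)
  have "cnj \<in> borel_measurable borel"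
    by (intro borel_measurable_continuous_onI linear_continuous_on bounded_linear_cnj)
  then have [measurable]: "(\<lambda>q. cnj (fourier2 g q)) \<in> borel_measurable borel"
    using g by (intro measurable_compose[OF borel_measurable_fourier2])
  have [measurable]: "(\<lambda>q. of_real (W_weight \<alpha> \<beta> q) :: complex) \<in> borel_measurable borel"
    by (rule measurable_compose[OF borel_measurable_W_weight borel_measurable_of_real])
  show ?thesis
  proof (rule Bochner_Integration.integrable_bound)
    show "integrable lborel (\<lambda>q. L1norm f * C * decay_weight q)"
      using integrable_decay_weight by simp
    show "AE q in lborel. norm (fourier2 f q * cnj (fourier2 g q) * of_real (W_weight \<alpha> \<beta> q))
        \<le> norm (L1norm f * C * decay_weight q)"
      by (intro AE_I2 order_trans[OF bound]) simp
  qed measurable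
qed

lemma W_inner_linear_left:
  assumes "schwartz f1" "schwartz f2" "schwartz g" "\<alpha> \<ge> 0" "\<beta> \<ge> 0"
  shows "W_inner \<alpha> \<beta> (\<lambda>p. a * f1 p + b * f2 p) g = a * W_inner \<alpha> \<beta> f1 g + b * W_inner \<alpha> \<beta> f2 g"
  using integrable_W_inner[OF assms(1,3-5)] integrable_W_inner[OF assms(2,3-5)]
  by (simp add: W_inner_eq fourier2_linear_comb[OF assms(1,2)] distrib_right mult.assoc)

lemma W_inner_linear_right:
  assumes "schwartz f" "schwartz g1" "schwartz g2" "\<alpha> \<ge> 0" "\<beta> \<ge> 0"
  shows "W_inner \<alpha> \<beta> f (\<lambda>p. a * g1 p + b * g2 p) = cnj a * W_inner \<alpha> \<beta> f g1 + cnj b * W_inner \<alpha> \<beta> f g2"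
  using integrable_W_inner[OF assms(1,2,4,5)] integrable_W_inner[OF assms(1,3,4,5)]
  by (simp add: W_inner_eq fourier2_linear_comb[OF assms(2,3)] algebra_simps)

lemma W_inner_fourier_multiplier:
  assumes "\<And>q. fourier2 f' q = m q * fourier2 f q" and "\<And>q. fourier2 g' q = m q * fourier2 g q"
    and "\<And>q. (norm (m q))\<^sup>2 * W_weight \<alpha> \<beta> q = c * W_weight \<alpha>' \<beta>' q"
  shows "W_inner \<alpha> \<beta> f' g' = of_real c * W_inner \<alpha>' \<beta>' f g"
proof -
  have "fourier2 f' q * cnj (fourier2 g' q) * of_real (W_weight \<alpha> \<beta> q)
      = of_real c * (fourier2 f q * cnj (fourier2 g q) * of_real (W_weight \<alpha>' \<beta>' q))" for q
  proof -
    have "fourier2 f' q * cnj (fourier2 g' q) * of_real (W_weight \<alpha> \<beta> q)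
        = fourier2 f q * cnj (fourier2 g q) * (of_real ((norm (m q))\<^sup>2) * of_real (W_weight \<alpha> \<beta> q))"
      by (simp add: assms(1,2) complex_norm_square mult_ac del: of_real_power)
    also have "of_real ((norm (m q))\<^sup>2) * of_real (W_weight \<alpha> \<beta> q) = (of_real (c * W_weight \<alpha>' \<beta>' q) :: complex)"
      by (simp only: of_real_mult[symmetric] assms(3))
    finally show ?thesis by (simp add: mult_ac)
  qed
  then show ?thesis
    by (simp add: W_inner_eq)
qed

lemma power_mult_powr:
  fixes x :: real
  assumes "x \<ge> 0"
  shows "x ^ n * x powr a = x powr (a + real n)"
  using assms by (cases "x = 0") (simp_all add: powr_add powr_realpow)

lemma W_inner_funpow_partial1:
  assumes "schwartz f" "schwartz g"
  shows "W_inner \<alpha> \<beta> ((partial1 ^^ k) f) ((partial1 ^^ k) g)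
       = of_real ((2 * pi) ^ (2 * k)) * W_inner (\<alpha> + real k) \<beta> f g"
proof (rule W_inner_fourier_multiplier[where m="\<lambda>q. (\<i> * of_real (2 * pi * fst q)) ^ k"])
  fix q :: "real \<times> real"
  show "fourier2 ((partial1 ^^ k) f) q = (\<i> * of_real (2 * pi * fst q)) ^ k * fourier2 f q"
    "fourier2 ((partial1 ^^ k) g) q = (\<i> * of_real (2 * pi * fst q)) ^ k * fourier2 g q"
    using fourier2_funpow_partial1[OF assms(1)] fourier2_funpow_partial1[OF assms(2)] by (cases q; simp)+
  have "\<bar>fst q\<bar> ^ (2 * k) * \<bar>fst q\<bar> powr (2 * \<alpha>) = \<bar>fst q\<bar> powr (2 * (\<alpha> + real k))"
    by (simp add: power_mult_powr algebra_simps)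
  then show "(norm ((\<i> * of_real (2 * pi * fst q)) ^ k))\<^sup>2 * W_weight \<alpha> \<beta> q
      = (2 * pi) ^ (2 * k) * W_weight (\<alpha> + real k) \<beta> q"
    by (simp add: W_weight_def norm_mult norm_power abs_mult power_mult_distrib
        power_mult[symmetric] mult.commute[of 2 k] mult_ac)
qed

lemma W_inner_funpow_partial2:
  assumes "schwartz f" "schwartz g"
  shows "W_inner \<alpha> \<beta> ((partial2 ^^ l) f) ((partial2 ^^ l) g)
       = of_real ((2 * pi) ^ (2 * l)) * W_inner \<alpha> (\<beta> + real l) f g"
proof (rule W_inner_fourier_multiplier[where m="\<lambda>q. (\<i> * of_real (2 * pi * snd q)) ^ l"])
  fix q :: "real \<times> real"
  show "fourier2 ((partial2 ^^ l) f) q = (\<i> * of_real (2 * pi * snd q)) ^ l * fourier2 f q"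
    "fourier2 ((partial2 ^^ l) g) q = (\<i> * of_real (2 * pi * snd q)) ^ l * fourier2 g q"
    using fourier2_funpow_partial2[OF assms(1)] fourier2_funpow_partial2[OF assms(2)] by (cases q; simp)+
  have "\<bar>snd q\<bar> ^ (2 * l) * \<bar>snd q\<bar> powr (2 * \<beta>) = \<bar>snd q\<bar> powr (2 * (\<beta> + real l))"
    by (simp add: power_mult_powr algebra_simps)
  then show "(norm ((\<i> * of_real (2 * pi * snd q)) ^ l))\<^sup>2 * W_weight \<alpha> \<beta> q
      = (2 * pi) ^ (2 * l) * W_weight \<alpha> (\<beta> + real l) q"
    by (simp add: W_weight_def norm_mult norm_power abs_mult power_mult_distrib
        power_mult[symmetric] mult.commute[of 2 l] mult_ac)
qed

section \<open>Polarisation\<close>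

definition mixed_op :: "nat \<Rightarrow> nat \<Rightarrow> complex \<Rightarrow> (real \<times> real \<Rightarrow> complex) \<Rightarrow> real \<times> real \<Rightarrow> complex" where
  "mixed_op k l t f = (\<lambda>p. (partial1 ^^ k) f p - t * (partial2 ^^ l) f p)"

lemma BE_iff_mixed_op:
  "BE k l \<alpha> \<beta> \<sigma> \<tau> \<longleftrightarrow> (\<exists>C. \<forall>f g. schwartz f \<longrightarrow> schwartz g \<longrightarrow>
     norm (W_inner \<alpha> \<beta> f g) \<le> C * L1norm (mixed_op k l \<tau> f) * L1norm (mixed_op k l \<sigma> g))"
  by (simp add: BE_def mixed_op_def)

lemma schwartz_mixed_op: "schwartz f \<Longrightarrow> schwartz (mixed_op k l t f)"
  using schwartz_linear_comb[of "(partial1 ^^ k) f" "(partial2 ^^ l) f" 1 "- t"]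
  by (simp add: mixed_op_def schwartz_funpow_partial1 schwartz_funpow_partial2)

lemma funpow_double: "(h ^^ n) ((h ^^ n) x) = (h ^^ (2 * n)) x"
  by (simp add: mult_2 funpow_add)

lemma mixed_op_factorization:
  assumes "schwartz f"
  shows "mixed_op k l t (mixed_op k l (- t) f) = mixed_op (2 * k) (2 * l) (t\<^sup>2) f"
proof -
  have A: "schwartz ((partial1 ^^ k) f)" and B: "schwartz ((partial2 ^^ l) f)"
    using assms by (simp_all add: schwartz_funpow_partial1 schwartz_funpow_partial2)
  have "mixed_op k l (- t) f = (\<lambda>p. 1 * (partial1 ^^ k) f p + t * (partial2 ^^ l) f p)"
    by (simp add: mixed_op_def)
  then show ?thesis
    unfolding mixed_op_def[of k l t]
    by (simp only: funpow_partial1_linear_comb[OF A B] funpow_partial2_linear_comb[OF A B])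
      (simp add: funpow_partial1_partial2_commute[OF assms] mixed_op_def funpow_double
        fun_eq_iff power2_eq_square algebra_simps)
qed

lemma funpow_partial1_eq_mixed_op:
  "(partial1 ^^ k) f = (\<lambda>p. (1 / 2) * mixed_op k l t f p + (1 / 2) * mixed_op k l (- t) f p)"
  by (simp add: mixed_op_def fun_eq_iff field_simps)

lemma funpow_partial2_eq_mixed_op:
  "t \<noteq> 0 \<Longrightarrow> (partial2 ^^ l) f = (\<lambda>p. - (1 / (2 * t)) * mixed_op k l t f p + (1 / (2 * t)) * mixed_op k l (- t) f p)"
  by (simp add: mixed_op_def fun_eq_iff field_simps)

lemma L1norm_nonneg: "L1norm h \<ge> 0"
  by (simp add: L1norm_def)

lemma BE_uniform_constant:
  assumes "BE k l \<alpha> \<beta> \<sigma> \<tau>" "BE k l \<alpha> \<beta> (- \<sigma>) (- \<tau>)" "BE k l \<alpha> \<beta> \<sigma> (- \<tau>)" "BE k l \<alpha> \<beta> (- \<sigma>) \<tau>"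
  obtains C where "\<And>s t f g. s \<in> {\<sigma>, - \<sigma>} \<Longrightarrow> t \<in> {\<tau>, - \<tau>} \<Longrightarrow> schwartz f \<Longrightarrow> schwartz g \<Longrightarrow>
      norm (W_inner \<alpha> \<beta> f g) \<le> C * L1norm (mixed_op k l t f) * L1norm (mixed_op k l s g)"
proof -
  obtain C1 where C1: "\<And>f g. schwartz f \<Longrightarrow> schwartz g \<Longrightarrow>
      norm (W_inner \<alpha> \<beta> f g) \<le> C1 * L1norm (mixed_op k l \<tau> f) * L1norm (mixed_op k l \<sigma> g)"
    using assms(1) unfolding BE_iff_mixed_op by blast
  obtain C2 where C2: "\<And>f g. schwartz f \<Longrightarrow> schwartz g \<Longrightarrow>
      norm (W_inner \<alpha> \<beta> f g) \<le> C2 * L1norm (mixed_op k l (- \<tau>) f) * L1norm (mixed_op k l (- \<sigma>) g)"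
    using assms(2) unfolding BE_iff_mixed_op by blast
  obtain C3 where C3: "\<And>f g. schwartz f \<Longrightarrow> schwartz g \<Longrightarrow>
      norm (W_inner \<alpha> \<beta> f g) \<le> C3 * L1norm (mixed_op k l (- \<tau>) f) * L1norm (mixed_op k l \<sigma> g)"
    using assms(3) unfolding BE_iff_mixed_op by blast
  obtain C4 where C4: "\<And>f g. schwartz f \<Longrightarrow> schwartz g \<Longrightarrow>
      norm (W_inner \<alpha> \<beta> f g) \<le> C4 * L1norm (mixed_op k l \<tau> f) * L1norm (mixed_op k l (- \<sigma>) g)"
    using assms(4) unfolding BE_iff_mixed_op by blast
  have mono: "C' * P * Q \<le> (\<bar>C1\<bar> + \<bar>C2\<bar> + \<bar>C3\<bar> + \<bar>C4\<bar>) * P * Q"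
    if "C' \<in> {C1, C2, C3, C4}" "P \<ge> 0" "Q \<ge> 0" for C' P Q :: real
    using that by (intro mult_right_mono) auto
  show thesis
  proof (rule that[of "\<bar>C1\<bar> + \<bar>C2\<bar> + \<bar>C3\<bar> + \<bar>C4\<bar>"])
    fix s t f g assume "s \<in> {\<sigma>, - \<sigma>}" "t \<in> {\<tau>, - \<tau>}" and f: "schwartz f" and g: "schwartz g"
    then show "norm (W_inner \<alpha> \<beta> f g)
        \<le> (\<bar>C1\<bar> + \<bar>C2\<bar> + \<bar>C3\<bar> + \<bar>C4\<bar>) * L1norm (mixed_op k l t f) * L1norm (mixed_op k l s g)"
      using C1[OF f g] C2[OF f g] C3[OF f g] C4[OF f g]
      by (auto intro: order_trans[OF _ mono] L1norm_nonneg)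
  qed
qed

lemma norm_linear_comb_le:
  fixes x y :: "'a::real_normed_field"
  assumes "norm x \<le> B" and "norm y \<le> B"
  shows "norm (a * x + b * y) \<le> (norm a + norm b) * B"
proof -
  have "norm (a * x + b * y) \<le> norm a * norm x + norm b * norm y"
    by (metis norm_mult norm_triangle_ineq)
  also have "\<dots> \<le> norm a * B + norm b * B"
    using assms by (intro add_mono mult_left_mono) simp_all
  finally show ?thesis
    by (simp add: distrib_right)
qed

context
  fixes k l :: nat and \<alpha> \<beta> :: real and \<sigma> \<tau> :: complex and C :: real
  assumes nonneg: "\<alpha> \<ge> 0" "\<beta> \<ge> 0"
    and bound: "\<And>s t f g. s \<in> {\<sigma>, - \<sigma>} \<Longrightarrow> t \<in> {\<tau>, - \<tau>} \<Longrightarrow> schwartz f \<Longrightarrow> schwartz g \<Longrightarrow>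
      norm (W_inner \<alpha> \<beta> f g) \<le> C * L1norm (mixed_op k l t f) * L1norm (mixed_op k l s g)"
begin

lemma W_inner_mixed_op_le:
  assumes "t \<in> {\<tau>, - \<tau>}" "s \<in> {\<sigma>, - \<sigma>}" "schwartz f" "schwartz g"
  shows "norm (W_inner \<alpha> \<beta> (mixed_op k l t f) (mixed_op k l s g))
      \<le> C * L1norm (mixed_op (2 * k) (2 * l) (\<tau>\<^sup>2) f) * L1norm (mixed_op (2 * k) (2 * l) (\<sigma>\<^sup>2) g)"
  using bound[of "- s" "- t" "mixed_op k l t f" "mixed_op k l s g"]
    mixed_op_factorization[of f k l "- t"] mixed_op_factorization[of g k l "- s"] assms
  by (auto simp: schwartz_mixed_op)

lemma W_inner_mixed_op_comb_le:
  assumes f: "schwartz f" and g: "schwartz g"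
  shows "norm (W_inner \<alpha> \<beta> (\<lambda>p. a * mixed_op k l \<tau> f p + b * mixed_op k l (- \<tau>) f p)
                           (\<lambda>p. c * mixed_op k l \<sigma> g p + d * mixed_op k l (- \<sigma>) g p))
      \<le> (norm a + norm b) * (norm c + norm d)
         * (C * L1norm (mixed_op (2 * k) (2 * l) (\<tau>\<^sup>2) f) * L1norm (mixed_op (2 * k) (2 * l) (\<sigma>\<^sup>2) g))"
    (is "norm (W_inner \<alpha> \<beta> _ ?g) \<le> _ * _ * ?B")
proof -
  have Sf: "schwartz (mixed_op k l t f)" and Sg: "schwartz (mixed_op k l t g)" for t
    using f g by (simp_all add: schwartz_mixed_op)
  have inner: "norm (W_inner \<alpha> \<beta> (mixed_op k l t f) ?g) \<le> (norm c + norm d) * ?B"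
    if "t \<in> {\<tau>, - \<tau>}" for t
    unfolding W_inner_linear_right[OF Sf Sg Sg nonneg]
    by (rule norm_linear_comb_le[where a="cnj c" and b="cnj d", simplified]) (simp_all add: W_inner_mixed_op_le[OF that _ f g])
  show ?thesis
    unfolding W_inner_linear_left[OF Sf Sf schwartz_linear_comb[OF Sg Sg] nonneg]
    using norm_linear_comb_le[OF inner[of \<tau>, simplified] inner[of "- \<tau>", simplified], of a b]
    by (simp only: mult.assoc)
qed

lemma norm_W_inner_add_alpha_le:
  assumes "schwartz f" "schwartz g"
  shows "norm (W_inner (\<alpha> + real k) \<beta> f g)
      \<le> C / (2 * pi) ^ (2 * k) * L1norm (mixed_op (2 * k) (2 * l) (\<tau>\<^sup>2) f)
         * L1norm (mixed_op (2 * k) (2 * l) (\<sigma>\<^sup>2) g)"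
proof -
  have "(2 * pi) ^ (2 * k) * norm (W_inner (\<alpha> + real k) \<beta> f g)
      = norm (W_inner \<alpha> \<beta> ((partial1 ^^ k) f) ((partial1 ^^ k) g))"
    by (simp only: W_inner_funpow_partial1[OF assms] norm_mult norm_of_real) simp
  also have "\<dots> \<le> C * L1norm (mixed_op (2 * k) (2 * l) (\<tau>\<^sup>2) f) * L1norm (mixed_op (2 * k) (2 * l) (\<sigma>\<^sup>2) g)"
    unfolding funpow_partial1_eq_mixed_op[of k f l \<tau>] funpow_partial1_eq_mixed_op[of k g l \<sigma>]
    using W_inner_mixed_op_comb_le[OF assms, of "1 / 2" "1 / 2" "1 / 2" "1 / 2"] by simp
  finally show ?thesis
    by (simp add: field_simps)
qed

lemma norm_W_inner_add_beta_le:
  assumes "\<sigma> \<noteq> 0" "\<tau> \<noteq> 0" "schwartz f" "schwartz g"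
  shows "norm (W_inner \<alpha> (\<beta> + real l) f g)
      \<le> C / (norm \<tau> * norm \<sigma> * (2 * pi) ^ (2 * l)) * L1norm (mixed_op (2 * k) (2 * l) (\<tau>\<^sup>2) f)
         * L1norm (mixed_op (2 * k) (2 * l) (\<sigma>\<^sup>2) g)"
proof -
  have norm_sum: "norm (- (1 / (2 * t))) + norm (1 / (2 * t)) = 1 / norm t" if "t \<noteq> 0" for t :: complex
    using that by (simp add: norm_divide norm_mult)
  have "(2 * pi) ^ (2 * l) * norm (W_inner \<alpha> (\<beta> + real l) f g)
      = norm (W_inner \<alpha> \<beta> ((partial2 ^^ l) f) ((partial2 ^^ l) g))"
    by (simp only: W_inner_funpow_partial2[OF assms(3,4)] norm_mult norm_of_real) simp
  also have "\<dots> \<le> 1 / norm \<tau> * (1 / norm \<sigma>) * (C * L1norm (mixed_op (2 * k) (2 * l) (\<tau>\<^sup>2) f)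
         * L1norm (mixed_op (2 * k) (2 * l) (\<sigma>\<^sup>2) g))"
    unfolding funpow_partial2_eq_mixed_op[OF assms(2), of l f k] funpow_partial2_eq_mixed_op[OF assms(1), of l g k]
      norm_sum[OF assms(2), symmetric] norm_sum[OF assms(1), symmetric]
    by (rule W_inner_mixed_op_comb_le[OF assms(3,4)])
  finally show ?thesis
    using assms(1,2) by (simp add: field_simps)
qed

end

theorem lemma5:
  fixes k l :: nat and \<alpha> \<beta> :: real and \<sigma> \<tau> :: complex
  assumes "k \<ge> 1" and "l \<ge> 1"
    and "\<alpha> \<ge> 0" and "\<beta> \<ge> 0"
    and "\<sigma> * \<tau> \<noteq> 0"
    and "BE k l \<alpha> \<beta> \<sigma> \<tau>"
    and "BE k l \<alpha> \<beta> (- \<sigma>) (- \<tau>)"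
    and "BE k l \<alpha> \<beta> \<sigma> (- \<tau>)"
    and "BE k l \<alpha> \<beta> (- \<sigma>) \<tau>"
  shows "BE (2 * k) (2 * l) (\<alpha> + real k) \<beta> (\<sigma>\<^sup>2) (\<tau>\<^sup>2)
       \<and> BE (2 * k) (2 * l) \<alpha> (\<beta> + real l) (\<sigma>\<^sup>2) (\<tau>\<^sup>2)"
proof -
  obtain C where C: "\<And>s t f g. s \<in> {\<sigma>, - \<sigma>} \<Longrightarrow> t \<in> {\<tau>, - \<tau>} \<Longrightarrow> schwartz f \<Longrightarrow> schwartz g \<Longrightarrow>
      norm (W_inner \<alpha> \<beta> f g) \<le> C * L1norm (mixed_op k l t f) * L1norm (mixed_op k l s g)"
    using BE_uniform_constant[OF assms(6-9)] by blast
  have "\<sigma> \<noteq> 0" "\<tau> \<noteq> 0"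
    using assms(5) by auto
  then show ?thesis
    unfolding BE_iff_mixed_op
    using norm_W_inner_add_alpha_le[OF assms(3,4) C] norm_W_inner_add_beta_le[OF assms(3,4) C]
    by blast
qed

end
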